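(* Fix $\gamma\in(0,1)$ and set $\alpha^{\oplus}=\sqrt{\frac{1+\sqrt{1-\gamma}}{2\pi^2}}$, $\alpha^{\ominus}=\sqrt{\frac{1-\sqrt{1-\gamma}}{2\pi^2}}$. For $\varepsilon>0$ let $\Lambda=\Lambda_\varepsilon=\{k\in\mathbb{N}:\lceil\alpha^{\ominus}/\varepsilon\rceil\le k\le\lfloor\alpha^{\oplus}/\varepsilon\rfloor\}$, let $(c_k)_{k\in\Lambda}$ be independent standard normal random variables, and define the random function $f:[0,1]\to\mathbb{R}$ by $f(x)=\sum_{k\in\Lambda}c_k\sqrt{2}\cos(k\pi x)$. Then for arbitrary constants $p>1$ and $0<\eta<2$ there exists a constant $C>0$, independent of $\varepsilon$, such that $$\mathbb{E}\|f\|_{L^\infty(0,1)}^p\le C\Big(\sum_{k\in\Lambda}k^\eta\Big)^{p/2}+C\,|\Lambda|^{p/2}.$$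
   Context: $|\Lambda|$ denotes the cardinality of $\Lambda$. The functions $\sqrt2\cos(k\pi x)$ are orthonormal in $L^2(0,1)$. *)

theory Defs
  imports "HOL-Probability.Probability"
begin

definition alpha_plus :: "real \<Rightarrow> real" where
  "alpha_plus \<gamma> = sqrt ((1 + sqrt (1 - \<gamma>)) / (2 * pi\<^sup>2))"

definition alpha_minus :: "real \<Rightarrow> real" where
  "alpha_minus \<gamma> = sqrt ((1 - sqrt (1 - \<gamma>)) / (2 * pi\<^sup>2))"

definition Lambda :: "real \<Rightarrow> real \<Rightarrow> nat set" where
  "Lambda \<gamma> \<epsilon> = {k::nat. \<lceil>alpha_minus \<gamma> / \<epsilon>\<rceil> \<le> int k \<and> int k \<le> \<lfloor>alpha_plus \<gamma> / \<epsilon>\<rfloor>}"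

definition rand_f :: "nat set \<Rightarrow> (nat \<Rightarrow> real) \<Rightarrow> real \<Rightarrow> real" where
  "rand_f \<Lambda> c x = (\<Sum>k\<in>\<Lambda>. c k * sqrt 2 * cos (real k * pi * x))"

text \<open>Sup norm on [0,1] (equals the L-infinity norm for continuous functions).\<close>
definition sup_norm01 :: "(real \<Rightarrow> real) \<Rightarrow> real" where
  "sup_norm01 g = (SUP x\<in>{0..1}. \<bar>g x\<bar>)"

end

theory Submission
  imports Defs
begin

text \<open>
  Let m be the smallest frequency in Lambda and R the ratio of the two alphas, so that all
  frequencies and the cardinality n of Lambda are at most R m. Then f is Lipschitz with constant
  sqrt 2 pi R m sum |c_k|, so on the grid j / m^3 (0 <= j <= m^3) the supremum of |f| exceeds the
  largest grid value by at most sqrt 2 pi R m^-2 sum |c_k|. Every grid value is a centred Gaussian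
  of variance at most 2 n. Choose an even moment 2 r >= p with eta r >= 3 and split
  t^p <= l^p + l^(p - 2 r) t^(2 r) at the level l = (n m^eta)^(1/2): bounding the largest grid value
  by the sum over all m^3 + 1 grid points then costs only a factor m^(3 - eta r) <= 1. The result is
  E |f|_infinity^p <= C (n m^eta)^(p/2) <= C (sum of k^eta)^(p/2).
\<close>

lemma abs_cos_diff_le: "\<bar>cos x - cos y\<bar> \<le> \<bar>x - y\<bar>" for x y :: real
proof -
  have "\<bar>cos x - cos y\<bar> = 2 * \<bar>sin ((x + y) / 2)\<bar> * \<bar>sin ((y - x) / 2)\<bar>"
    by (simp add: cos_diff_cos abs_mult)
  also have "\<dots> \<le> 2 * 1 * \<bar>(y - x) / 2\<bar>"
    by (intro mult_mono abs_sin_x_le_abs_x abs_sin_le_one) auto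
  finally show ?thesis by simp
qed

lemma powr_le_powr_add_power:
  fixes t l p :: real and q :: nat
  assumes "0 \<le> t" "0 < l" "0 < p" "p \<le> q"
  shows "t powr p \<le> l powr p + l powr (p - q) * t ^ q"
proof (cases "t \<le> l")
  case True
  then have "t powr p \<le> l powr p" using assms by (intro powr_mono2) auto
  moreover have "0 \<le> l powr (p - q) * t ^ q" using assms by auto
  ultimately show ?thesis by linarith
next
  case False
  then have t: "0 < t" "l < t" using assms by auto
  have "t powr p = t powr (p - q) * t ^ q"
    using t by (simp add: powr_add[symmetric] powr_realpow[symmetric])
  also have "\<dots> \<le> l powr (p - q) * t ^ q"
    using t assms by (intro mult_right_mono powr_mono2') auto
  finally show ?thesis by (smt (verit) powr_ge_zero)
qed

lemma add_powr_le:
  fixes a b p :: real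
  assumes "0 \<le> a" "0 \<le> b" "0 < p"
  shows "(a + b) powr p \<le> 2 powr p * (a powr p + b powr p)"
proof -
  have "(a + b) powr p \<le> (2 * max a b) powr p" using assms by (intro powr_mono2) auto
  also have "\<dots> = 2 powr p * max a b powr p" using assms by (simp add: powr_mult)
  also have "max a b powr p \<le> a powr p + b powr p" by (cases "a \<le> b") (auto simp: max_def)
  finally show ?thesis by simp
qed

lemma sum_power_le_card_power_mult_sum_power:
  fixes x :: "'a \<Rightarrow> real"
  assumes "finite I" "\<And>i. i \<in> I \<Longrightarrow> 0 \<le> x i" "0 < q"
  shows "(\<Sum>i\<in>I. x i) ^ q \<le> real (card I) ^ q * (\<Sum>i\<in>I. x i ^ q)"
proof (cases "I = {}")
  case True
  then show ?thesis using assms(3) by (simp add: zero_power)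
next
  case False
  define xmax where "xmax = Max (x ` I)"
  have xmax_in: "xmax \<in> x ` I" unfolding xmax_def using assms False by (intro Max_in) auto
  have "(\<Sum>i\<in>I. x i) \<le> (\<Sum>i\<in>I. xmax)"
    unfolding xmax_def using assms by (intro sum_mono) auto
  then have "(\<Sum>i\<in>I. x i) ^ q \<le> real (card I) ^ q * xmax ^ q"
    using assms by (simp add: power_mono sum_nonneg flip: power_mult_distrib)
  also have "xmax ^ q \<le> (\<Sum>i\<in>I. x i ^ q)"
    using xmax_in assms by (auto intro!: member_le_sum[where f = "\<lambda>i. x i ^ q"])
  finally show ?thesis by (simp add: mult_left_mono)
qed

section \<open>Discretization of the supremum\<close>

lemma abs_rand_f_le: "\<bar>rand_f L c x\<bar> \<le> sqrt 2 * (\<Sum>k\<in>L. \<bar>c k\<bar>)"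
proof -
  have "\<bar>rand_f L c x\<bar> \<le> (\<Sum>k\<in>L. \<bar>c k * sqrt 2 * cos (real k * pi * x)\<bar>)"
    unfolding rand_f_def by (rule sum_abs)
  also have "\<dots> \<le> (\<Sum>k\<in>L. \<bar>c k\<bar> * sqrt 2)"
    by (intro sum_mono) (simp add: abs_mult mult_left_le)
  finally show ?thesis by (metis mult.commute sum_distrib_right)
qed

lemma sup_norm01_rand_f_nonneg: "0 \<le> sup_norm01 (rand_f L c)"
proof -
  have "bdd_above ((\<lambda>x. \<bar>rand_f L c x\<bar>) ` {0..1})"
    using abs_rand_f_le by (intro bdd_aboveI2) blast
  then have "\<bar>rand_f L c 0\<bar> \<le> sup_norm01 (rand_f L c)"
    unfolding sup_norm01_def by (intro cSUP_upper) auto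
  then show ?thesis by linarith
qed

lemma abs_rand_f_diff_le:
  assumes "\<And>k. k \<in> L \<Longrightarrow> real k \<le> K"
  shows "\<bar>rand_f L c x - rand_f L c y\<bar> \<le> sqrt 2 * pi * K * \<bar>x - y\<bar> * (\<Sum>k\<in>L. \<bar>c k\<bar>)"
proof -
  have "\<bar>rand_f L c x - rand_f L c y\<bar>
      = \<bar>\<Sum>k\<in>L. c k * sqrt 2 * (cos (real k * pi * x) - cos (real k * pi * y))\<bar>"
    unfolding rand_f_def by (simp add: sum_subtractf[symmetric] algebra_simps)
  also have "\<dots> \<le> (\<Sum>k\<in>L. \<bar>c k * sqrt 2 * (cos (real k * pi * x) - cos (real k * pi * y))\<bar>)"
    by (rule sum_abs)
  also have "\<dots> \<le> (\<Sum>k\<in>L. \<bar>c k\<bar> * (sqrt 2 * pi * K * \<bar>x - y\<bar>))"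
  proof (intro sum_mono)
    fix k assume "k \<in> L"
    have "\<bar>cos (real k * pi * x) - cos (real k * pi * y)\<bar> \<le> \<bar>real k * pi * (x - y)\<bar>"
      using abs_cos_diff_le by (simp add: right_diff_distrib)
    also have "\<dots> \<le> K * pi * \<bar>x - y\<bar>"
      using assms[OF \<open>k \<in> L\<close>] by (simp add: abs_mult mult_right_mono)
    finally have "\<bar>c k\<bar> * sqrt 2 * \<bar>cos (real k * pi * x) - cos (real k * pi * y)\<bar>
        \<le> \<bar>c k\<bar> * sqrt 2 * (K * pi * \<bar>x - y\<bar>)"
      by (intro mult_left_mono) auto
    then show "\<bar>c k * sqrt 2 * (cos (real k * pi * x) - cos (real k * pi * y))\<bar>
        \<le> \<bar>c k\<bar> * (sqrt 2 * pi * K * \<bar>x - y\<bar>)"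
      by (simp add: abs_mult mult_ac)
  qed
  finally show ?thesis by (simp add: sum_distrib_right mult.commute)
qed

lemma sup_norm01_rand_f_le_grid:
  assumes "finite L" "\<And>k. k \<in> L \<Longrightarrow> real k \<le> K" "0 < N" "0 \<le> K"
  shows "sup_norm01 (rand_f L c) \<le> Max ((\<lambda>j. \<bar>rand_f L c (real j / N)\<bar>) ` {0..N})
           + sqrt 2 * pi * K / N * (\<Sum>k\<in>L. \<bar>c k\<bar>)"
  unfolding sup_norm01_def
proof (intro cSUP_least)
  fix x :: real assume x: "x \<in> {0..1}"
  define j where "j = nat \<lfloor>x * N\<rfloor>"
  have xN: "0 \<le> x * N" "x * N \<le> N" using x by (auto intro: mult_left_le_one_le)
  have "real j = of_int \<lfloor>x * N\<rfloor>" unfolding j_def using xN by simp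
  then have j: "real j \<le> x * N" "x * N < real j + 1" "j \<le> N" using xN by linarith+
  have "\<bar>x - real j / N\<bar> = \<bar>x * N - real j\<bar> / N"
    using assms(3) by (simp add: field_simps)
  also have "\<dots> \<le> 1 / N" using j assms(3) by (intro divide_right_mono) auto
  finally have dist: "\<bar>x - real j / N\<bar> \<le> 1 / N" .
  have "\<bar>rand_f L c x - rand_f L c (real j / N)\<bar>
      \<le> sqrt 2 * pi * K * \<bar>x - real j / N\<bar> * (\<Sum>k\<in>L. \<bar>c k\<bar>)"
    by (rule abs_rand_f_diff_le[OF assms(2)])
  also have "\<dots> \<le> sqrt 2 * pi * K * (1 / N) * (\<Sum>k\<in>L. \<bar>c k\<bar>)"
    using dist assms(4) by (intro mult_right_mono mult_left_mono) (auto intro: sum_nonneg)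
  finally have "\<bar>rand_f L c x - rand_f L c (real j / N)\<bar> \<le> sqrt 2 * pi * K / N * (\<Sum>k\<in>L. \<bar>c k\<bar>)"
    by simp
  moreover have "\<bar>rand_f L c (real j / N)\<bar> \<le> Max ((\<lambda>j. \<bar>rand_f L c (real j / N)\<bar>) ` {0..N})"
    using j by (intro Max_ge) auto
  ultimately show "\<bar>rand_f L c x\<bar> \<le> Max ((\<lambda>j. \<bar>rand_f L c (real j / N)\<bar>) ` {0..N})
           + sqrt 2 * pi * K / N * (\<Sum>k\<in>L. \<bar>c k\<bar>)"
    by simp
qed auto

lemma sup_norm01_rand_f_powr_le:
  fixes c :: "nat \<Rightarrow> real" and K l p :: real and N q :: nat
  assumes "finite L" "\<And>k. k \<in> L \<Longrightarrow> real k \<le> K" "0 \<le> K" "0 < N"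
    and "0 < l" "0 < p" "p \<le> q"
  shows "sup_norm01 (rand_f L c) powr p
    \<le> 2 powr p * (l powr p + 1)
      + 2 powr p * l powr (p - q) * (\<Sum>j\<in>{0..N}. \<bar>rand_f L c (real j / N)\<bar> ^ q)
      + 2 powr p * (sqrt 2 * pi * K / N * card L) ^ q * (\<Sum>k\<in>L. \<bar>c k\<bar> ^ q)"
proof -
  define A where "A = Max ((\<lambda>j. \<bar>rand_f L c (real j / N)\<bar>) ` {0..N})"
  define W where "W = sqrt 2 * pi * K / N"
  define B where "B = W * (\<Sum>k\<in>L. \<bar>c k\<bar>)"
  have "A \<in> (\<lambda>j. \<bar>rand_f L c (real j / N)\<bar>) ` {0..N}" unfolding A_def by (intro Max_in) auto
  then obtain j where j: "j \<in> {0..N}" "A = \<bar>rand_f L c (real j / N)\<bar>" by blast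
  have A: "0 \<le> A" "A ^ q \<le> (\<Sum>j\<in>{0..N}. \<bar>rand_f L c (real j / N)\<bar> ^ q)"
    using j by (auto intro!: member_le_sum[where f = "\<lambda>j. \<bar>rand_f L c (real j / N)\<bar> ^ q"])
  have W: "0 \<le> W" unfolding W_def using assms(3) by simp
  have B: "0 \<le> B" "B ^ q \<le> (W * card L) ^ q * (\<Sum>k\<in>L. \<bar>c k\<bar> ^ q)"
  proof -
    show "0 \<le> B" unfolding B_def using W by (simp add: sum_nonneg)
    have "(\<Sum>k\<in>L. \<bar>c k\<bar>) ^ q \<le> real (card L) ^ q * (\<Sum>k\<in>L. \<bar>c k\<bar> ^ q)"
      using assms by (intro sum_power_le_card_power_mult_sum_power) auto
    then show "B ^ q \<le> (W * card L) ^ q * (\<Sum>k\<in>L. \<bar>c k\<bar> ^ q)"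
      unfolding B_def using W by (simp add: power_mult_distrib mult_left_mono mult.assoc)
  qed
  have "sup_norm01 (rand_f L c) powr p \<le> (A + B) powr p"
    using sup_norm01_rand_f_le_grid[OF assms(1,2,4,3)] sup_norm01_rand_f_nonneg assms(6)
    unfolding A_def B_def W_def by (intro powr_mono2) auto
  also have "\<dots> \<le> 2 powr p * (A powr p + B powr p)"
    using A B assms(6) by (intro add_powr_le)
  also have "A powr p \<le> l powr p + l powr (p - q) * (\<Sum>j\<in>{0..N}. \<bar>rand_f L c (real j / N)\<bar> ^ q)"
    using powr_le_powr_add_power[of A l p q] A assms(5-7)
    by (smt (verit) mult_left_mono powr_ge_zero)
  also have "B powr p \<le> 1 + (W * card L) ^ q * (\<Sum>k\<in>L. \<bar>c k\<bar> ^ q)"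
    using powr_le_powr_add_power[of B 1 p q] B assms(6,7) by simp
  finally show ?thesis
    unfolding W_def by (simp add: algebra_simps)
qed

section \<open>Moments of Gaussian linear combinations\<close>

definition normal_even_moment :: "nat \<Rightarrow> real" where
  "normal_even_moment r = fact (2 * r) / (2 ^ r * fact r)"

lemma normal_even_moment_pos: "0 < normal_even_moment r"
  by (simp add: normal_even_moment_def)

lemma nn_integral_normal_even_power:
  assumes X: "distributed M lborel X (normal_density 0 \<sigma>)" and \<sigma>: "0 < \<sigma>"
  shows "(\<integral>\<^sup>+\<omega>. ennreal (X \<omega> ^ (2 * r)) \<partial>M) = ennreal (normal_even_moment r * \<sigma> ^ (2 * r))"
proof -
  have "(\<integral>\<^sup>+\<omega>. ennreal (X \<omega> ^ (2 * r)) \<partial>M)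
      = (\<integral>\<^sup>+x. ennreal (normal_density 0 \<sigma> x) * ennreal (x ^ (2 * r)) \<partial>lborel)"
    by (rule distributed_nn_integral[OF X, symmetric]) auto
  also have "\<dots> = (\<integral>\<^sup>+x. ennreal (normal_density 0 \<sigma> x * (x - 0) ^ (2 * r)) \<partial>lborel)"
    by (intro nn_integral_cong) (simp add: ennreal_mult' zero_le_even_power)
  also have "\<dots> = ennreal (fact (2 * r) / ((2 / \<sigma>\<^sup>2) ^ r * fact r))"
    using normal_moment_even[OF \<sigma>, of 0 r]
    by (intro nn_integral_eq_integral[THEN trans])
       (auto simp: has_bochner_integral_iff zero_le_even_power intro!: mult_nonneg_nonneg)
  also have "fact (2 * r) / ((2 / \<sigma>\<^sup>2) ^ r * fact r) = normal_even_moment r * \<sigma> ^ (2 * r)"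
    using \<sigma> by (simp add: normal_even_moment_def power_divide field_simps flip: power_mult power_mult_distrib)
  finally show ?thesis .
qed

lemma nn_integral_std_normal_even_power:
  assumes "distributed M lborel X std_normal_density"
  shows "(\<integral>\<^sup>+\<omega>. ennreal (\<bar>X \<omega>\<bar> ^ (2 * r)) \<partial>M) = ennreal (normal_even_moment r)"
  using nn_integral_normal_even_power[OF assms, of r] by (simp add: power_even_abs)

lemma nn_integral_indep_normal_sum_even_power:
  fixes c :: "'i \<Rightarrow> 'a \<Rightarrow> real" and a :: "'i \<Rightarrow> real"
  assumes "prob_space M" "finite L" "prob_space.indep_vars M (\<lambda>_. borel) c L"
    and normal: "\<And>k. k \<in> L \<Longrightarrow> distributed M lborel (c k) std_normal_density"
    and "0 < r"
  shows "(\<integral>\<^sup>+\<omega>. ennreal (\<bar>\<Sum>k\<in>L. a k * c k \<omega>\<bar> ^ (2 * r)) \<partial>M)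
          = ennreal (normal_even_moment r * (\<Sum>k\<in>L. (a k)\<^sup>2) ^ r)"
proof -
  interpret prob_space M by fact
  define I where "I = {k\<in>L. a k \<noteq> 0}"
  have finI: "finite I" using \<open>finite L\<close> by (simp add: I_def)
  have sum_I: "(\<Sum>k\<in>L. a k * c k \<omega>) = (\<Sum>k\<in>I. a k * c k \<omega>)" for \<omega>
    unfolding I_def using \<open>finite L\<close> by (intro sum.mono_neutral_right) auto
  have sum_sq_I: "(\<Sum>k\<in>L. (a k)\<^sup>2) = (\<Sum>k\<in>I. (a k)\<^sup>2)"
    unfolding I_def using \<open>finite L\<close> by (intro sum.mono_neutral_right) auto
  show ?thesis
  proof (cases "I = {}")
    case True
    then show ?thesis using \<open>0 < r\<close> by (simp add: sum_I sum_sq_I zero_power)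
  next
    case False
    define s where "s = sqrt (\<Sum>k\<in>I. (a k)\<^sup>2)"
    have s: "0 < s" unfolding s_def using False finI
      by (intro real_sqrt_gt_zero sum_pos) (auto simp: I_def)
    have "indep_vars (\<lambda>_. borel) c I"
      using assms(3) by (rule indep_vars_subset) (auto simp: I_def)
    then have indep: "indep_vars (\<lambda>_. borel) (\<lambda>k \<omega>. a k * c k \<omega>) I"
      using indep_vars_compose[where Y = "\<lambda>k x. a k * x"] by (auto simp: o_def)
    have "distributed M lborel (\<lambda>\<omega>. 0 + a k * c k \<omega>) (normal_density (0 + a k * 0) (\<bar>a k\<bar> * 1))"
      if "k \<in> I" for k
      using that normal by (intro normal_density_affine) (auto simp: I_def)
    then have "distributed M lborel (\<lambda>\<omega>. \<Sum>k\<in>I. a k * c k \<omega>) (normal_density 0 s)"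
      using sum_indep_normal[OF finI False indep, of "\<lambda>k. \<bar>a k\<bar>" "\<lambda>_. 0"]
      by (auto simp: s_def I_def)
    from nn_integral_normal_even_power[OF this s, of r]
    show ?thesis
      by (simp add: sum_I sum_sq_I power_even_abs s_def power_mult sum_nonneg)
  qed
qed

lemma nn_integral_rand_f_even_power_le:
  fixes c :: "nat \<Rightarrow> 'a \<Rightarrow> real"
  assumes "prob_space M" "finite L" "prob_space.indep_vars M (\<lambda>_. borel) c L"
    and "\<And>k. k \<in> L \<Longrightarrow> distributed M lborel (c k) std_normal_density" "0 < r"
  shows "(\<integral>\<^sup>+\<omega>. ennreal (\<bar>rand_f L (\<lambda>k. c k \<omega>) x\<bar> ^ (2 * r)) \<partial>M)
          \<le> ennreal (normal_even_moment r * (2 * real (card L)) ^ r)"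
proof -
  define a where "a k = sqrt 2 * cos (real k * pi * x)" for k
  have "rand_f L (\<lambda>k. c k \<omega>) x = (\<Sum>k\<in>L. a k * c k \<omega>)" for \<omega>
    unfolding rand_f_def a_def by (simp add: mult_ac)
  then have "(\<integral>\<^sup>+\<omega>. ennreal (\<bar>rand_f L (\<lambda>k. c k \<omega>) x\<bar> ^ (2 * r)) \<partial>M)
      = ennreal (normal_even_moment r * (\<Sum>k\<in>L. (a k)\<^sup>2) ^ r)"
    using nn_integral_indep_normal_sum_even_power[OF assms] by simp
  also have "(\<Sum>k\<in>L. (a k)\<^sup>2) \<le> (\<Sum>k\<in>L. 2)"
    unfolding a_def by (intro sum_mono) (simp add: power_mult_distrib cos_squared_eq)
  then have "normal_even_moment r * (\<Sum>k\<in>L. (a k)\<^sup>2) ^ r \<le> normal_even_moment r * (2 * real (card L)) ^ r"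
    using normal_even_moment_pos
    by (intro mult_left_mono power_mono) (auto simp: mult.commute intro: sum_nonneg less_imp_le)
  finally show ?thesis by (simp add: ennreal_leI)
qed

lemma borel_measurable_rand_f:
  assumes "\<And>k. k \<in> L \<Longrightarrow> c k \<in> borel_measurable M"
  shows "(\<lambda>\<omega>. rand_f L (\<lambda>k. c k \<omega>) x) \<in> borel_measurable M"
  unfolding rand_f_def using assms by measurable

lemma nn_integral_affine_le:
  fixes U V :: "'a \<Rightarrow> real"
  assumes "prob_space M" "U \<in> borel_measurable M" "V \<in> borel_measurable M"
    and "\<And>\<omega>. 0 \<le> U \<omega>" "\<And>\<omega>. 0 \<le> V \<omega>" "0 \<le> \<alpha>" "0 \<le> \<beta>" "0 \<le> \<delta>" "0 \<le> u" "0 \<le> v"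
    and "(\<integral>\<^sup>+\<omega>. ennreal (U \<omega>) \<partial>M) \<le> ennreal u"
    and "(\<integral>\<^sup>+\<omega>. ennreal (V \<omega>) \<partial>M) \<le> ennreal v"
  shows "(\<integral>\<^sup>+\<omega>. ennreal (\<alpha> + \<beta> * U \<omega> + \<delta> * V \<omega>) \<partial>M) \<le> ennreal (\<alpha> + \<beta> * u + \<delta> * v)"
proof -
  interpret prob_space M by fact
  have "(\<integral>\<^sup>+\<omega>. ennreal (\<alpha> + \<beta> * U \<omega> + \<delta> * V \<omega>) \<partial>M)
      = (\<integral>\<^sup>+\<omega>. ennreal \<alpha> + ennreal \<beta> * ennreal (U \<omega>) + ennreal \<delta> * ennreal (V \<omega>) \<partial>M)"
    using assms by (intro nn_integral_cong) (simp add: ennreal_plus ennreal_mult)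
  also have "\<dots> = (\<integral>\<^sup>+\<omega>. ennreal \<alpha> + ennreal \<beta> * ennreal (U \<omega>) \<partial>M)
                 + (\<integral>\<^sup>+\<omega>. ennreal \<delta> * ennreal (V \<omega>) \<partial>M)"
    using assms by (intro nn_integral_add) auto
  also have "(\<integral>\<^sup>+\<omega>. ennreal \<alpha> + ennreal \<beta> * ennreal (U \<omega>) \<partial>M)
      = ennreal \<alpha> + (\<integral>\<^sup>+\<omega>. ennreal \<beta> * ennreal (U \<omega>) \<partial>M)"
    using assms by (subst nn_integral_add) (auto simp: emeasure_space_1)
  also have "(\<integral>\<^sup>+\<omega>. ennreal \<beta> * ennreal (U \<omega>) \<partial>M) = ennreal \<beta> * (\<integral>\<^sup>+\<omega>. ennreal (U \<omega>) \<partial>M)"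
    using assms by (intro nn_integral_cmult) auto
  also have "(\<integral>\<^sup>+\<omega>. ennreal \<delta> * ennreal (V \<omega>) \<partial>M) = ennreal \<delta> * (\<integral>\<^sup>+\<omega>. ennreal (V \<omega>) \<partial>M)"
    using assms by (intro nn_integral_cmult) auto
  also have "ennreal \<alpha> + ennreal \<beta> * (\<integral>\<^sup>+\<omega>. ennreal (U \<omega>) \<partial>M) + ennreal \<delta> * (\<integral>\<^sup>+\<omega>. ennreal (V \<omega>) \<partial>M)
      \<le> ennreal \<alpha> + ennreal \<beta> * ennreal u + ennreal \<delta> * ennreal v"
    using assms by (intro add_mono mult_left_mono) auto
  also have "\<dots> = ennreal (\<alpha> + \<beta> * u + \<delta> * v)"
    using assms by (simp add: ennreal_plus ennreal_mult)
  finally show ?thesis .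
qed

lemma nn_integral_sum_le:
  fixes U :: "'i \<Rightarrow> 'a \<Rightarrow> real"
  assumes "finite J" "\<And>j. j \<in> J \<Longrightarrow> U j \<in> borel_measurable M" "\<And>j \<omega>. 0 \<le> U j \<omega>"
    and "\<And>j. j \<in> J \<Longrightarrow> (\<integral>\<^sup>+\<omega>. ennreal (U j \<omega>) \<partial>M) \<le> ennreal (u j)" "\<And>j. 0 \<le> u j"
  shows "(\<integral>\<^sup>+\<omega>. ennreal (\<Sum>j\<in>J. U j \<omega>) \<partial>M) \<le> ennreal (\<Sum>j\<in>J. u j)"
proof -
  have "(\<integral>\<^sup>+\<omega>. ennreal (\<Sum>j\<in>J. U j \<omega>) \<partial>M) = (\<integral>\<^sup>+\<omega>. (\<Sum>j\<in>J. ennreal (U j \<omega>)) \<partial>M)"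
    using assms(3) by (intro nn_integral_cong) (simp add: sum_ennreal)
  also have "\<dots> = (\<Sum>j\<in>J. \<integral>\<^sup>+\<omega>. ennreal (U j \<omega>) \<partial>M)"
    using assms(2) by (intro nn_integral_sum) auto
  also have "\<dots> \<le> (\<Sum>j\<in>J. ennreal (u j))" using assms by (intro sum_mono) auto
  also have "\<dots> = ennreal (\<Sum>j\<in>J. u j)" using assms(5) by simp
  finally show ?thesis .
qed

lemma grid_term_le:
  fixes n m \<eta> p :: real and r :: nat
  assumes "1 \<le> n" "1 \<le> m" "0 \<le> \<eta>" "3 \<le> \<eta> * r"
  shows "sqrt (n * m powr \<eta>) powr (p - real (2 * r)) * ((m ^ 3 + 1) * (2 * n) ^ r)
           \<le> 2 ^ (r + 1) * (n * m powr \<eta>) powr (p / 2)"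
proof -
  define x where "x = n * m powr \<eta>"
  have "1 \<le> m powr \<eta>" using assms by (intro ge_one_powr_ge_zero)
  then have x: "1 \<le> x" unfolding x_def using assms mult_mono[of 1 n 1 "m powr \<eta>"] by simp
  have m_pow1: "1 \<le> m powr (\<eta> * r)" using assms by (intro ge_one_powr_ge_zero) auto
  have "m ^ 3 = m powr 3" using assms by (simp add: powr_numeral)
  also have "\<dots> \<le> m powr (\<eta> * r)" using assms by (intro powr_mono) auto
  finally have m_pow3: "m ^ 3 \<le> m powr (\<eta> * r)" .
  have "sqrt x powr (p - real (2 * r)) = (x powr (1 / 2)) powr (p - real (2 * r))"
    using x by (simp add: powr_half_sqrt)
  also have "\<dots> = x powr (p / 2) / x powr r"
    by (simp add: powr_powr powr_diff[symmetric] field_simps)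
  also have "x powr r = x ^ r" using x by (simp add: powr_realpow)
  also have "x ^ r = n ^ r * m powr (\<eta> * r)"
    using assms by (simp add: x_def power_mult_distrib powr_realpow[symmetric] powr_powr)
  finally have "sqrt x powr (p - real (2 * r)) * ((m ^ 3 + 1) * (2 * n) ^ r)
      = x powr (p / 2) * 2 ^ r * ((m ^ 3 + 1) / m powr (\<eta> * r))"
    using assms by (simp add: power_mult_distrib)
  also have "\<dots> \<le> x powr (p / 2) * 2 ^ r * 2"
    using m_pow1 m_pow3 by (intro mult_left_mono) (auto simp: divide_le_eq)
  finally show ?thesis unfolding x_def by simp
qed

lemma lipschitz_term_le:
  fixes n m R :: real and r :: nat
  assumes "1 \<le> m" "0 \<le> n" "n \<le> R * m" "0 < r"
  shows "(sqrt 2 * pi * (R * m) / m ^ 3 * n) ^ (2 * r) * n \<le> (sqrt 2 * pi * R\<^sup>2) ^ (2 * r) * R"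
proof -
  have R: "0 \<le> R" using assms zero_le_mult_iff[of R m] by linarith
  have "sqrt 2 * pi * (R * m) / m ^ 3 * n \<le> sqrt 2 * pi * (R * m) / m ^ 3 * (R * m)"
    using assms R by (intro mult_left_mono) auto
  also have "\<dots> = sqrt 2 * pi * R\<^sup>2 / m"
    using assms by (simp add: power2_eq_square power3_eq_cube)
  finally have "(sqrt 2 * pi * (R * m) / m ^ 3 * n) ^ (2 * r) * n
      \<le> (sqrt 2 * pi * R\<^sup>2 / m) ^ (2 * r) * (R * m)"
    using assms R by (intro mult_mono power_mono) auto
  also have "\<dots> = (sqrt 2 * pi * R\<^sup>2) ^ (2 * r) * R * (m / m ^ (2 * r))"
    by (simp add: power_divide)
  also have "\<dots> \<le> (sqrt 2 * pi * R\<^sup>2) ^ (2 * r) * R"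
    using assms R power_increasing[of 1 "2 * r" m] by (intro mult_left_le) auto
  finally show ?thesis .
qed

definition sup_moment_const :: "real \<Rightarrow> nat \<Rightarrow> real \<Rightarrow> real" where
  "sup_moment_const p r R = 2 powr p * (2 + 2 ^ (r + 1) * normal_even_moment r
     + (sqrt 2 * pi * R\<^sup>2) ^ (2 * r) * R * normal_even_moment r)"

lemma sup_moment_const_pos: "0 \<le> R \<Longrightarrow> 0 < sup_moment_const p r R"
  unfolding sup_moment_const_def
  using normal_even_moment_pos[of r, THEN less_imp_le]
  by (intro mult_pos_pos add_pos_nonneg) auto

lemma nn_integral_sup_norm01_rand_f_powr_le_grid:
  fixes c :: "nat \<Rightarrow> 'a \<Rightarrow> real" and K l p :: real and N r :: nat
  assumes "0 \<le> K" "0 < N" "0 < l" "0 < p" "p \<le> 2 * r"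
    and L: "finite L" "\<And>k. k \<in> L \<Longrightarrow> real k \<le> K"
    and M: "prob_space M" "prob_space.indep_vars M (\<lambda>_. borel) c L"
      "\<And>k. k \<in> L \<Longrightarrow> distributed M lborel (c k) std_normal_density"
  shows "(\<integral>\<^sup>+\<omega>. ennreal (sup_norm01 (rand_f L (\<lambda>k. c k \<omega>)) powr p) \<partial>M)
    \<le> ennreal (2 powr p * (l powr p + 1)
      + 2 powr p * l powr (p - 2 * r) * ((real N + 1) * normal_even_moment r * (2 * card L) ^ r)
      + 2 powr p * (sqrt 2 * pi * K / N * card L) ^ (2 * r) * (card L * normal_even_moment r))"
proof -
  interpret prob_space M by fact
  define \<mu> where "\<mu> = normal_even_moment r"
  define U where "U \<omega> = (\<Sum>j\<in>{0..N}. \<bar>rand_f L (\<lambda>k. c k \<omega>) (real j / N)\<bar> ^ (2 * r))" for \<omega>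
  define V where "V \<omega> = (\<Sum>k\<in>L. \<bar>c k \<omega>\<bar> ^ (2 * r))" for \<omega>
  have r: "0 < r" using assms by linarith
  have \<mu>: "0 \<le> \<mu>" unfolding \<mu>_def by (rule less_imp_le[OF normal_even_moment_pos])
  have c_meas: "c k \<in> borel_measurable M" if "k \<in> L" for k
    using distributed_measurable[OF M(3)[OF that]] by simp
  have U_meas: "U \<in> borel_measurable M" and V_meas: "V \<in> borel_measurable M"
    unfolding U_def V_def
    by (auto intro!: borel_measurable_sum borel_measurable_power borel_measurable_abs
                     borel_measurable_rand_f c_meas)
  have EU: "(\<integral>\<^sup>+\<omega>. ennreal (U \<omega>) \<partial>M) \<le> ennreal (\<Sum>j\<in>{0..N}. \<mu> * (2 * card L) ^ r)"
    unfolding U_def \<mu>_def using nn_integral_rand_f_even_power_le[OF M(1) L(1) M(2,3) r]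
    by (intro nn_integral_sum_le)
       (auto intro!: borel_measurable_power borel_measurable_abs borel_measurable_rand_f c_meas
             simp: less_imp_le[OF normal_even_moment_pos])
  have EV: "(\<integral>\<^sup>+\<omega>. ennreal (V \<omega>) \<partial>M) \<le> ennreal (\<Sum>k\<in>L. \<mu>)"
    unfolding V_def \<mu>_def using nn_integral_std_normal_even_power[OF M(3)] L(1)
    by (intro nn_integral_sum_le)
       (auto intro!: borel_measurable_power borel_measurable_abs c_meas
             simp: less_imp_le[OF normal_even_moment_pos])
  have "(\<integral>\<^sup>+\<omega>. ennreal (sup_norm01 (rand_f L (\<lambda>k. c k \<omega>)) powr p) \<partial>M)
      \<le> (\<integral>\<^sup>+\<omega>. ennreal (2 powr p * (l powr p + 1) + 2 powr p * l powr (p - 2 * r) * U \<omega>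
        + 2 powr p * (sqrt 2 * pi * K / N * card L) ^ (2 * r) * V \<omega>) \<partial>M)"
    using sup_norm01_rand_f_powr_le[OF L assms(1-4), where q = "2 * r"] assms(5)
    unfolding U_def V_def by (intro nn_integral_mono ennreal_leI) simp
  also have "\<dots> \<le> ennreal (2 powr p * (l powr p + 1)
      + 2 powr p * l powr (p - 2 * r) * (\<Sum>j\<in>{0..N}. \<mu> * (2 * card L) ^ r)
      + 2 powr p * (sqrt 2 * pi * K / N * card L) ^ (2 * r) * (\<Sum>k\<in>L. \<mu>))"
    using EU EV \<mu> assms(1)
    by (intro nn_integral_affine_le[OF M(1) U_meas V_meas]) (auto simp: U_def V_def intro!: sum_nonneg)
  finally show ?thesis by (simp add: \<mu>_def ac_simps)
qed

lemma nn_integral_sup_norm01_rand_f_powr_le: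
  fixes c :: "nat \<Rightarrow> 'a \<Rightarrow> real" and R p \<eta> :: real and m r :: nat
  assumes p: "0 < p" "p \<le> 2 * r" and \<eta>: "0 \<le> \<eta>" "3 \<le> \<eta> * r"
    and L: "finite L" "L \<noteq> {}" "\<And>k. k \<in> L \<Longrightarrow> real k \<le> R * m" "real (card L) \<le> R * m"
    and m: "1 \<le> m"
    and M: "prob_space M" "prob_space.indep_vars M (\<lambda>_. borel) c L"
      "\<And>k. k \<in> L \<Longrightarrow> distributed M lborel (c k) std_normal_density"
  shows "(\<integral>\<^sup>+\<omega>. ennreal (sup_norm01 (rand_f L (\<lambda>k. c k \<omega>)) powr p) \<partial>M)
    \<le> ennreal (sup_moment_const p r R * (card L * m powr \<eta>) powr (p / 2))"
proof -
  define \<mu> where "\<mu> = normal_even_moment r"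
  define n where "n = real (card L)"
  define X where "X = (n * m powr \<eta>) powr (p / 2)"
  define l where "l = sqrt (n * m powr \<eta>)"
  have \<mu>: "0 < \<mu>" unfolding \<mu>_def by (rule normal_even_moment_pos)
  have n: "1 \<le> n" using L by (simp add: n_def Suc_le_eq card_gt_0_iff)
  have R: "0 \<le> R" using n m L(4) zero_le_mult_iff[of R "real m"] unfolding n_def by linarith
  have "1 \<le> real m powr \<eta>" using m \<eta> by (intro ge_one_powr_ge_zero) auto
  then have x: "1 \<le> n * m powr \<eta>" using n mult_mono[of 1 n 1 "real m powr \<eta>"] by simp
  have X: "1 \<le> X" "l powr p = X"
    using x p unfolding X_def l_def by (auto simp: ge_one_powr_ge_zero powr_half_sqrt[symmetric] powr_powr)
  have "l powr (p - 2 * r) * ((real (m ^ 3) + 1) * \<mu> * (2 * n) ^ r)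
      = \<mu> * (l powr (p - real (2 * r)) * ((real m ^ 3 + 1) * (2 * n) ^ r))"
    by (simp add: mult_ac)
  also have "\<dots> \<le> \<mu> * (2 ^ (r + 1) * X)"
    using grid_term_le[OF n _ \<eta>, of m p] m \<mu> unfolding l_def X_def by (intro mult_left_mono) auto
  finally have grid: "l powr (p - 2 * r) * ((real (m ^ 3) + 1) * \<mu> * (2 * n) ^ r) \<le> 2 ^ (r + 1) * \<mu> * X"
    by (simp add: mult_ac)
  have "(sqrt 2 * pi * (R * m) / real (m ^ 3) * n) ^ (2 * r) * (n * \<mu>)
      \<le> \<mu> * ((sqrt 2 * pi * R\<^sup>2) ^ (2 * r) * R)"
    using lipschitz_term_le[of m n R r] L(4) m n p \<mu> unfolding n_def
    by (simp add: mult_ac mult_left_mono)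
  also have "\<dots> \<le> \<mu> * ((sqrt 2 * pi * R\<^sup>2) ^ (2 * r) * R * X)"
    using X R \<mu> mult_left_mono[of 1 X "(sqrt 2 * pi * R\<^sup>2) ^ (2 * r) * R"]
    by (intro mult_left_mono) auto
  finally have lip: "(sqrt 2 * pi * (R * m) / real (m ^ 3) * n) ^ (2 * r) * (n * \<mu>)
      \<le> (sqrt 2 * pi * R\<^sup>2) ^ (2 * r) * R * \<mu> * X"
    by (simp add: mult_ac)
  have "(\<integral>\<^sup>+\<omega>. ennreal (sup_norm01 (rand_f L (\<lambda>k. c k \<omega>)) powr p) \<partial>M)
    \<le> ennreal (2 powr p * (l powr p + 1)
      + 2 powr p * l powr (p - 2 * r) * ((real (m ^ 3) + 1) * \<mu> * (2 * n) ^ r)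
      + 2 powr p * (sqrt 2 * pi * (R * m) / real (m ^ 3) * n) ^ (2 * r) * (n * \<mu>))"
    using nn_integral_sup_norm01_rand_f_powr_le_grid[OF _ _ _ p L(1,3) M, of "m ^ 3" l] R m x
    unfolding \<mu>_def n_def l_def by simp
  also have "\<dots> \<le> ennreal (2 powr p * (2 + 2 ^ (r + 1) * \<mu> + (sqrt 2 * pi * R\<^sup>2) ^ (2 * r) * R * \<mu>) * X)"
  proof (intro ennreal_leI)
    have "(l powr p + 1) + l powr (p - 2 * r) * ((real (m ^ 3) + 1) * \<mu> * (2 * n) ^ r)
        + (sqrt 2 * pi * (R * m) / real (m ^ 3) * n) ^ (2 * r) * (n * \<mu>)
      \<le> (2 + 2 ^ (r + 1) * \<mu> + (sqrt 2 * pi * R\<^sup>2) ^ (2 * r) * R * \<mu>) * X"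
      using grid lip X by (simp add: algebra_simps)
    from mult_left_mono[OF this, of "2 powr p"] show "2 powr p * (l powr p + 1)
      + 2 powr p * l powr (p - 2 * r) * ((real (m ^ 3) + 1) * \<mu> * (2 * n) ^ r)
      + 2 powr p * (sqrt 2 * pi * (R * m) / real (m ^ 3) * n) ^ (2 * r) * (n * \<mu>)
      \<le> 2 powr p * (2 + 2 ^ (r + 1) * \<mu> + (sqrt 2 * pi * R\<^sup>2) ^ (2 * r) * R * \<mu>) * X"
      by (simp add: algebra_simps)
  qed
  finally show ?thesis unfolding sup_moment_const_def \<mu>_def X_def n_def .
qed

section \<open>The frequency window\<close>

lemma alpha_minus_pos: "0 < \<gamma> \<Longrightarrow> 0 < alpha_minus \<gamma>"
  unfolding alpha_minus_def by (simp add: divide_pos_pos)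

lemma alpha_minus_le_alpha_plus: "\<gamma> \<le> 1 \<Longrightarrow> alpha_minus \<gamma> \<le> alpha_plus \<gamma>"
  unfolding alpha_minus_def alpha_plus_def by (intro real_sqrt_le_mono divide_right_mono) auto

lemma alpha_plus_div_alpha_minus_ge_one: "0 < \<gamma> \<Longrightarrow> \<gamma> \<le> 1 \<Longrightarrow> 1 \<le> alpha_plus \<gamma> / alpha_minus \<gamma>"
  using alpha_minus_pos alpha_minus_le_alpha_plus by simp

lemma Lambda_le_alpha_plus: "k \<in> Lambda \<gamma> \<epsilon> \<Longrightarrow> real k \<le> alpha_plus \<gamma> / \<epsilon>"
  unfolding Lambda_def by (simp add: le_floor_iff)

lemma alpha_minus_le_Lambda: "k \<in> Lambda \<gamma> \<epsilon> \<Longrightarrow> alpha_minus \<gamma> / \<epsilon> \<le> real k"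
  unfolding Lambda_def by (simp add: ceiling_le_iff)

lemma Lambda_subset:
  assumes "0 < \<gamma>" "0 < \<epsilon>"
  shows "Lambda \<gamma> \<epsilon> \<subseteq> {1..nat \<lfloor>alpha_plus \<gamma> / \<epsilon>\<rfloor>}"
proof
  fix k assume k: "k \<in> Lambda \<gamma> \<epsilon>"
  have "0 < real k" using alpha_minus_le_Lambda[OF k] alpha_minus_pos[OF assms(1)] assms(2)
    by (smt (verit) divide_pos_pos)
  moreover have "int k \<le> \<lfloor>alpha_plus \<gamma> / \<epsilon>\<rfloor>" using k by (simp add: Lambda_def)
  ultimately show "k \<in> {1..nat \<lfloor>alpha_plus \<gamma> / \<epsilon>\<rfloor>}" by auto
qed

lemma card_Lambda_le:
  assumes "0 < \<gamma>" "\<gamma> \<le> 1" "0 < \<epsilon>"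
  shows "real (card (Lambda \<gamma> \<epsilon>)) \<le> alpha_plus \<gamma> / \<epsilon>"
proof -
  have "card (Lambda \<gamma> \<epsilon>) \<le> nat \<lfloor>alpha_plus \<gamma> / \<epsilon>\<rfloor>"
    using card_mono[OF _ Lambda_subset[OF assms(1,3)]] by simp
  moreover have "0 \<le> alpha_plus \<gamma> / \<epsilon>"
    using alpha_minus_pos[OF assms(1)] alpha_minus_le_alpha_plus[OF assms(2)] assms(3) by simp
  ultimately show ?thesis by linarith
qed

lemma nn_integral_sup_norm01_rand_f_Lambda_le:
  fixes c :: "nat \<Rightarrow> 'a \<Rightarrow> real" and \<gamma> \<epsilon> p \<eta> :: real and r :: nat
  assumes \<gamma>: "0 < \<gamma>" "\<gamma> \<le> 1" and \<epsilon>: "0 < \<epsilon>"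
    and p: "0 < p" "p \<le> 2 * r" and \<eta>: "0 \<le> \<eta>" "3 \<le> \<eta> * r"
    and M: "prob_space M" "prob_space.indep_vars M (\<lambda>_. borel) c (Lambda \<gamma> \<epsilon>)"
      "\<And>k. k \<in> Lambda \<gamma> \<epsilon> \<Longrightarrow> distributed M lborel (c k) std_normal_density"
  shows "(\<integral>\<^sup>+\<omega>. ennreal (sup_norm01 (rand_f (Lambda \<gamma> \<epsilon>) (\<lambda>k. c k \<omega>)) powr p) \<partial>M)
    \<le> ennreal (sup_moment_const p r (alpha_plus \<gamma> / alpha_minus \<gamma>)
                 * (\<Sum>k\<in>Lambda \<gamma> \<epsilon>. real k powr \<eta>) powr (p / 2))"
proof (cases "Lambda \<gamma> \<epsilon> = {}")
  case True
  then show ?thesis using p by (simp add: rand_f_def sup_norm01_def)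
next
  case False
  define L where "L = Lambda \<gamma> \<epsilon>"
  define R where "R = alpha_plus \<gamma> / alpha_minus \<gamma>"
  define m where "m = Min L"
  have L: "finite L" "L \<noteq> {}"
    using finite_subset[OF Lambda_subset[OF \<gamma>(1) \<epsilon>]] False by (auto simp: L_def)
  have m: "m \<in> L" "\<And>k. k \<in> L \<Longrightarrow> m \<le> k" using L by (auto simp: m_def)
  have "1 \<le> m" using m(1) Lambda_subset[OF \<gamma>(1) \<epsilon>] by (auto simp: L_def)
  have R: "0 \<le> R" using alpha_plus_div_alpha_minus_ge_one[OF \<gamma>] by (simp add: R_def)
  have "alpha_plus \<gamma> / \<epsilon> = R * (alpha_minus \<gamma> / \<epsilon>)"
    using alpha_minus_pos[OF \<gamma>(1)] by (simp add: R_def)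
  also have "\<dots> \<le> R * m"
    using alpha_minus_le_Lambda m(1) R by (intro mult_left_mono) (auto simp: L_def)
  finally have window: "alpha_plus \<gamma> / \<epsilon> \<le> R * m" .
  have k_le: "real k \<le> R * m" if "k \<in> L" for k
    using Lambda_le_alpha_plus[of k \<gamma> \<epsilon>] that window unfolding L_def by linarith
  have card_le: "real (card L) \<le> R * m"
    using card_Lambda_le[OF \<gamma> \<epsilon>] window by (simp add: L_def)
  have "real (card L) * m powr \<eta> = (\<Sum>k\<in>L. real m powr \<eta>)" by simp
  also have "\<dots> \<le> (\<Sum>k\<in>L. real k powr \<eta>)"
    using m \<open>1 \<le> m\<close> \<eta> by (intro sum_mono powr_mono2) auto
  finally have sum_bound: "(real (card L) * m powr \<eta>) powr (p / 2) \<le> (\<Sum>k\<in>L. real k powr \<eta>) powr (p / 2)"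
    using p by (intro powr_mono2) auto
  have "(\<integral>\<^sup>+\<omega>. ennreal (sup_norm01 (rand_f L (\<lambda>k. c k \<omega>)) powr p) \<partial>M)
    \<le> ennreal (sup_moment_const p r R * (card L * m powr \<eta>) powr (p / 2))"
    using M unfolding L_def[symmetric]
    by (intro nn_integral_sup_norm01_rand_f_powr_le[OF p \<eta> L k_le card_le \<open>1 \<le> m\<close>])
  also have "\<dots> \<le> ennreal (sup_moment_const p r R * (\<Sum>k\<in>L. real k powr \<eta>) powr (p / 2))"
    using sum_bound sup_moment_const_pos[OF R, of p r] by (intro ennreal_leI mult_left_mono) auto
  finally show ?thesis unfolding L_def R_def .
qed

theorem theorem2p4:
  fixes \<gamma> p \<eta> :: real
  assumes "0 < \<gamma>" "\<gamma> < 1" "p > 1" "0 < \<eta>" "\<eta> < 2"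
  shows "\<exists>C>0. \<forall>\<epsilon>>0. \<forall>(M :: 'a measure) (c :: nat \<Rightarrow> 'a \<Rightarrow> real).
           prob_space M \<longrightarrow>
           prob_space.indep_vars M (\<lambda>_. borel) c (Lambda \<gamma> \<epsilon>) \<longrightarrow>
           (\<forall>k\<in>Lambda \<gamma> \<epsilon>. distributed M lborel (c k) std_normal_density) \<longrightarrow>
           (\<integral>\<^sup>+ \<omega>. ennreal ((sup_norm01 (rand_f (Lambda \<gamma> \<epsilon>) (\<lambda>k. c k \<omega>))) powr p) \<partial>M)
             \<le> ennreal (C * (\<Sum>k\<in>Lambda \<gamma> \<epsilon>. real k powr \<eta>) powr (p / 2)
                        + C * real (card (Lambda \<gamma> \<epsilon>)) powr (p / 2))"
proof -
  obtain r :: nat where r: "p / 2 + 3 / \<eta> \<le> r" using real_arch_simple by blast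
  have "0 < 3 / \<eta>" using assms(4) by simp
  then have "p \<le> 2 * r" "3 / \<eta> \<le> r" using r assms(3) by linarith+
  then have r_bounds: "p \<le> 2 * r" "3 \<le> \<eta> * r" using assms(4) by (auto simp: pos_divide_le_eq mult.commute)
  define C where "C = sup_moment_const p r (alpha_plus \<gamma> / alpha_minus \<gamma>)"
  have "0 < C" unfolding C_def using alpha_plus_div_alpha_minus_ge_one[of \<gamma>] assms
    by (intro sup_moment_const_pos) auto
  show ?thesis
  proof (intro exI[of _ C] conjI allI impI \<open>0 < C\<close>)
    fix \<epsilon> :: real and M :: "'a measure" and c :: "nat \<Rightarrow> 'a \<Rightarrow> real"
    assume "0 < \<epsilon>" "prob_space M" "prob_space.indep_vars M (\<lambda>_. borel) c (Lambda \<gamma> \<epsilon>)"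
      "\<forall>k\<in>Lambda \<gamma> \<epsilon>. distributed M lborel (c k) std_normal_density"
    with assms r_bounds have "(\<integral>\<^sup>+\<omega>. ennreal (sup_norm01 (rand_f (Lambda \<gamma> \<epsilon>) (\<lambda>k. c k \<omega>)) powr p) \<partial>M)
      \<le> ennreal (C * (\<Sum>k\<in>Lambda \<gamma> \<epsilon>. real k powr \<eta>) powr (p / 2))"
      unfolding C_def by (intro nn_integral_sup_norm01_rand_f_Lambda_le) auto
    also have "\<dots> \<le> ennreal (C * (\<Sum>k\<in>Lambda \<gamma> \<epsilon>. real k powr \<eta>) powr (p / 2)
                      + C * real (card (Lambda \<gamma> \<epsilon>)) powr (p / 2))"
      using \<open>0 < C\<close> by (intro ennreal_leI) simp
    finally show "(\<integral>\<^sup>+\<omega>. ennreal (sup_norm01 (rand_f (Lambda \<gamma> \<epsilon>) (\<lambda>k. c k \<omega>)) powr p) \<partial>M)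
      \<le> ennreal (C * (\<Sum>k\<in>Lambda \<gamma> \<epsilon>. real k powr \<eta>) powr (p / 2)
                 + C * real (card (Lambda \<gamma> \<epsilon>)) powr (p / 2))" .
  qed
qed

end
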